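(* For every integer $n\ge1$, with the polynomial matrix $N(x)$ defined below, $\operatorname{Pf}N(x)=(-1)^{n+1}\operatorname{Pf}N(-2n-1-x)$ as polynomials in $x$.
   Context: For an indeterminate $y$ and integer $k\ge0$, $\binom yk=y(y-1)\cdots(y-k+1)/k!$. For integers $i,j\ge1$ define the polynomials $R_{i,j}(x)=\sum_{\ell=0}^{i-1}\frac{j-i}{i}\binom{j-1}{i-1-\ell}\binom{\ell+j}{\ell}\binom{2x+2n+2}{\ell+j+1}$ and $T_{i,j}(x)=\binom{2x+2n+1}{i}\big(\binom{x+n}{j}+\binom{x+n+1}{j}\big)$. $N(x)$ is the $(2n+2)\times(2n+2)$ skew-symmetric matrix with $N_{i,j}(x)=R_{i,j}(x)+T_{i,j}(x)-T_{j,i}(x)$ for $1\le i,j\le 2n$, $N_{i,2n+1}(x)=\binom{2n+2x+1}{i}-\binom{n+x}{i}-\binom{n+x+1}{i}$ and $N_{i,2n+2}(x)=\binom{x+n}{i-1}$ for $1\le i\le 2n$, and $N_{2n+1,2n+2}(x)=0$. *)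

theory Defs
  imports "HOL-Combinatorics.Combinatorics"
begin

definition pfaffian :: "nat \<Rightarrow> (nat \<Rightarrow> nat \<Rightarrow> 'a::field_char_0) \<Rightarrow> 'a" where
  "pfaffian d A =
     (\<Sum>s | s permutes {1..d}. of_int (sign s) * (\<Prod>i=1..d div 2. A (s (2*i - 1)) (s (2*i))))
     / (2 ^ (d div 2) * fact (d div 2))"

definition Rpol :: "nat \<Rightarrow> 'a::field_char_0 \<Rightarrow> nat \<Rightarrow> nat \<Rightarrow> 'a" where
  "Rpol n x i j = (\<Sum>l=0..i-1.
      (of_int (int j - int i) / of_nat i) * of_nat ((j - 1) choose (i - 1 - l))
      * of_nat ((l + j) choose l)
      * ((2*x + 2*of_nat n + 2) gchoose (l + j + 1)))"

definition Tpol :: "nat \<Rightarrow> 'a::field_char_0 \<Rightarrow> nat \<Rightarrow> nat \<Rightarrow> 'a" where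
  "Tpol n x i j = ((2*x + 2*of_nat n + 1) gchoose i)
      * (((x + of_nat n) gchoose j) + ((x + of_nat n + 1) gchoose j))"

definition Ncol :: "nat \<Rightarrow> 'a::field_char_0 \<Rightarrow> nat \<Rightarrow> 'a" where
  "Ncol n x i = ((2*of_nat n + 2*x + 1) gchoose i) - ((of_nat n + x) gchoose i)
      - ((of_nat n + x + 1) gchoose i)"

definition Nmat :: "nat \<Rightarrow> 'a::field_char_0 \<Rightarrow> nat \<Rightarrow> nat \<Rightarrow> 'a" where
  "Nmat n x i j =
    (if 1 \<le> i \<and> i \<le> 2*n \<and> 1 \<le> j \<and> j \<le> 2*n then Rpol n x i j + Tpol n x i j - Tpol n x j i
     else if 1 \<le> i \<and> i \<le> 2*n \<and> j = 2*n+1 then Ncol n x i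
     else if 1 \<le> i \<and> i \<le> 2*n \<and> j = 2*n+2 then (x + of_nat n) gchoose (i - 1)
     else if i = 2*n+1 \<and> 1 \<le> j \<and> j \<le> 2*n then - Ncol n x j
     else if i = 2*n+2 \<and> 1 \<le> j \<and> j \<le> 2*n then - ((x + of_nat n) gchoose (j - 1))
     else 0)"

end

theory Submission
  imports Defs "HOL-Computational_Algebra.Polynomial" "HOL-Computational_Algebra.Formal_Power_Series"
begin

text \<open>
  Let \<open>B\<close> be the lower triangular matrix \<open>B\<^sub>i\<^sub>a = (-1)^(i-1) * (i-1 choose a-1)\<close>. By Vandermonde's
  identity it maps the sequences \<open>z gchoose a\<close> and \<open>z gchoose (a-1)\<close> to \<open>-((-z) gchoose i)\<close> and
  \<open>(-1-z) gchoose (i-1)\<close>, and \<open>x \<mapsto> -2n-1-x\<close> turns the arguments \<open>2x+2n+1\<close>, \<open>x+n\<close>, \<open>x+n+1\<close>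
  into \<open>-(2x+2n+1)\<close>, \<open>-(x+n+1)\<close>, \<open>-(x+n)\<close>. Hence with \<open>M = diag(B, -1, 1)\<close> we get
  \<open>N(-2n-1-x) = M N(x) M\<^sup>T\<close> entrywise. For the \<open>T\<close>-part and the last two columns this is immediate;
  for the \<open>R\<^sub>i\<^sub>j\<close>-part both sides, as polynomials in \<open>w = 2x+2n+2\<close>, have the same forward
  difference and vanish at \<open>w = 1\<close>. Finally \<open>Pf(M A M\<^sup>T) = det M * Pf A\<close> and
  \<open>det M = (-1)^n * (-1)\<close>.
\<close>

section \<open>Pfaffians under congruence\<close>

definition det_on :: "('i \<Rightarrow> 'i \<Rightarrow> 'a::comm_ring_1) \<Rightarrow> 'i set \<Rightarrow> 'a" where
  "det_on M D = (\<Sum>s | s permutes D. of_int (sign s) * (\<Prod>p\<in>D. M (s p) p))"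

lemma sum_sign_prod_eq_0_if_not_inj_on:
  fixes M :: "'i \<Rightarrow> 'j \<Rightarrow> 'a::field_char_0"
  assumes fin: "finite D" and pq: "p \<in> D" "q \<in> D" "p \<noteq> q" and h: "h p = h q"
  shows "(\<Sum>s | s permutes D. of_int (sign s) * (\<Prod>r\<in>D. M (s r) (h r))) = 0"
proof -
  let ?F = "\<lambda>s. of_int (sign s) * (\<Prod>r\<in>D. M (s r) (h r)) :: 'a"
  let ?t = "transpose p q"
  have t: "?t permutes D" by (rule permutes_swap_id[OF pq(1,2)])
  have "?F (s \<circ> ?t) = - ?F s" if s: "s permutes D" for s
  proof -
    have "sign (s \<circ> ?t) = - sign s"
      using sign_compose[of s ?t] sign_swap_id[of p q] pq fin s t
      by (auto simp: permutation_permutes)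
    moreover have "(\<Prod>r\<in>D. M (s (?t r)) (h r)) = (\<Prod>r\<in>D. M (s (?t r)) (h (?t r)))"
      using h by (intro prod.cong refl) (auto simp: transpose_def)
    moreover have "\<dots> = (\<Prod>r\<in>D. M (s r) (h r))"
      using prod.reindex_bij_betw[OF permutes_imp_bij[OF t], of "\<lambda>r. M (s r) (h r)"] by simp
    ultimately show ?thesis by simp
  qed
  then have "(\<Sum>s | s permutes D. ?F s) = - (\<Sum>s | s permutes D. ?F s)"
    by (subst sum_permutations_compose_right[OF t]) (simp add: sum_negf)
  then show ?thesis by simp
qed

lemma sum_sign_prod_permutes:
  fixes M :: "'i \<Rightarrow> 'i \<Rightarrow> 'a::comm_ring_1"
  assumes fin: "finite D" and t: "t permutes D"
  shows "(\<Sum>s | s permutes D. of_int (sign s) * (\<Prod>r\<in>D. M (s r) (t r))) = of_int (sign t) * det_on M D"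
proof -
  have "of_int (sign (s \<circ> t)) * (\<Prod>r\<in>D. M ((s \<circ> t) r) (t r))
      = of_int (sign t) * (of_int (sign s) * (\<Prod>p\<in>D. M (s p) p))" if s: "s permutes D" for s
  proof -
    have "sign (s \<circ> t) = sign s * sign t"
      using sign_compose[of s t] fin s t by (auto simp: permutation_permutes)
    moreover have "(\<Prod>r\<in>D. M ((s \<circ> t) r) (t r)) = (\<Prod>p\<in>D. M (s p) p)"
      using prod.reindex_bij_betw[OF permutes_imp_bij[OF t], of "\<lambda>p. M (s p) p"] by simp
    ultimately show ?thesis by (simp add: mult_ac)
  qed
  then show ?thesis
    by (subst sum_permutations_compose_right[OF t]) (simp add: det_on_def sum_distrib_left)
qed

lemma permutes_eq_id_if_le:
  fixes s :: "nat \<Rightarrow> nat"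
  assumes fin: "finite D" and s: "s permutes D" and le: "\<And>p. p \<in> D \<Longrightarrow> p \<le> s p"
  shows "s = id"
proof
  fix p
  show "s p = id p"
  proof (cases "p \<in> D")
    case True
    have "(\<Sum>q\<in>D. s q) = (\<Sum>q\<in>D. q)"
      using sum.reindex_bij_betw[OF permutes_imp_bij[OF s], of id] by simp
    then have "\<not> p < s p"
      using True le sum_strict_mono_ex1[OF fin, of id s] by fastforce
    then show ?thesis using le[OF True] by simp
  qed (simp add: permutes_not_in[OF s])
qed

lemma det_on_lower_triangular:
  fixes M :: "nat \<Rightarrow> nat \<Rightarrow> 'a::comm_ring_1"
  assumes fin: "finite D" and lower: "\<And>i a. i \<in> D \<Longrightarrow> a \<in> D \<Longrightarrow> i < a \<Longrightarrow> M i a = 0"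
  shows "det_on M D = (\<Prod>p\<in>D. M p p)"
proof -
  have "of_int (sign s) * (\<Prod>p\<in>D. M (s p) p) = 0" if s: "s permutes D" and ns: "s \<noteq> id" for s
  proof -
    obtain p where "p \<in> D" "s p < p" using permutes_eq_id_if_le[OF fin s] ns by (meson not_le)
    then have "M (s p) p = 0" using lower s by (simp add: permutes_in_image)
    then have "(\<Prod>p\<in>D. M (s p) p) = 0" using \<open>p \<in> D\<close> fin by (metis prod_zero)
    then show ?thesis by simp
  qed
  then have "det_on M D = (\<Sum>s\<in>{id}. of_int (sign s) * (\<Prod>p\<in>D. M (s p) p))"
    unfolding det_on_def
    by (intro sum.mono_neutral_right finite_permutations fin) (auto simp: permutes_id)
  then show ?thesis by simp
qed

lemma sum_inj_PiE_eq_sum_permutes: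
  assumes fin: "finite D"
  shows "(\<Sum>h | h \<in> D \<rightarrow>\<^sub>E D \<and> inj_on h D. F h) = (\<Sum>t | t permutes D. F (restrict t D))"
proof (rule sum.reindex_bij_witness[where j = "\<lambda>h. restrict_id h D" and i = "\<lambda>t. restrict t D"])
  fix t assume "t \<in> {t. t permutes D}"
  then have t: "t permutes D" by simp
  show "restrict_id (restrict t D) D = t"
    by (auto simp: restrict_id_def permutes_not_in[OF t])
  show "restrict t D \<in> {h. h \<in> D \<rightarrow>\<^sub>E D \<and> inj_on h D}"
    using permutes_in_image[OF t] permutes_inj_on[OF t] by (auto simp: inj_on_def)
next
  fix h assume "h \<in> {h. h \<in> D \<rightarrow>\<^sub>E D \<and> inj_on h D}"
  then have h: "h \<in> D \<rightarrow>\<^sub>E D" "inj_on h D" by auto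
  moreover have "h ` D \<subseteq> D" using h(1) by auto
  ultimately have "bij_betw h D D"
    using endo_inj_surj[OF fin] by (simp add: bij_betw_def)
  then show "restrict_id h D \<in> {t. t permutes D}" by (simp add: permutes_restrict_id)
  show "restrict (restrict_id h D) D = h"
    using h(1) by (auto simp: restrict_id_def PiE_def extensional_def)
  then show "F (restrict (restrict_id h D) D) = F h" by simp
qed

lemma prod_consecutive_pairs:
  fixes m :: nat
  shows "(\<Prod>i=1..m. f (2*i-1) * f (2*i)) = (\<Prod>p=1..2*m. (f p :: 'a::comm_monoid_mult))"
proof (induction m)
  case (Suc m)
  have "(\<Prod>p=1..2*Suc m. f p) = f (Suc (Suc (2*m))) * (f (Suc (2*m)) * (\<Prod>p=1..2*m. f p))"
    by (simp add: prod.nat_ivl_Suc' mult_ac)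
  then show ?case using Suc by (simp add: prod.nat_ivl_Suc' mult_ac)
qed simp

lemma prod_sum_pairs_PiE:
  fixes F :: "nat \<Rightarrow> 'b \<Rightarrow> 'b \<Rightarrow> 'a::comm_semiring_1"
  assumes "finite C"
  shows "(\<Prod>i=1..m. \<Sum>a\<in>C. \<Sum>b\<in>C. F i a b)
       = (\<Sum>h\<in>{1..2*m} \<rightarrow>\<^sub>E C. \<Prod>i=1..m. F i (h (2*i-1)) (h (2*i)))"
proof -
  define unpair where "unpair g = (\<lambda>p\<in>{1..2*m}. if even p then snd (g (p div 2)) else fst (g (Suc p div 2)))"
    for g :: "nat \<Rightarrow> 'b \<times> 'b"
  define pair where "pair h = (\<lambda>i\<in>{1..m}. (h (2*i-1), h (2*i)))" for h :: "nat \<Rightarrow> 'b"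
  have unpair_at: "unpair g (2*i-1) = fst (g i)" "unpair g (2*i) = snd (g i)" if "i \<in> {1..m}" for g i
    using that by (auto simp: unpair_def)
  have half_in: "(if even p then p div 2 else Suc p div 2) \<in> {1..m}" if "p \<in> {1..2*m}" for p
    using that by (auto elim!: oddE)
  have "(\<Prod>i=1..m. \<Sum>a\<in>C. \<Sum>b\<in>C. F i a b) = (\<Prod>i=1..m. \<Sum>ab\<in>C\<times>C. F i (fst ab) (snd ab))"
    by (simp add: sum.cartesian_product case_prod_beta)
  also have "\<dots> = (\<Sum>g\<in>{1..m} \<rightarrow>\<^sub>E C\<times>C. \<Prod>i=1..m. F i (fst (g i)) (snd (g i)))"
    using assms by (intro prod_sum_PiE) auto
  also have "\<dots> = (\<Sum>h\<in>{1..2*m} \<rightarrow>\<^sub>E C. \<Prod>i=1..m. F i (h (2*i-1)) (h (2*i)))"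
  proof (rule sum.reindex_bij_witness[where j = unpair and i = pair])
    fix g assume g: "g \<in> {1..m} \<rightarrow>\<^sub>E C\<times>C"
    show "pair (unpair g) = g"
      using g unpair_at by (auto simp: pair_def PiE_def extensional_def)
    show "unpair g \<in> {1..2*m} \<rightarrow>\<^sub>E C"
      using g half_in by (fastforce simp: unpair_def PiE_iff mem_Times_iff split: if_splits)
    show "(\<Prod>i=1..m. F i (unpair g (2*i-1)) (unpair g (2*i))) = (\<Prod>i=1..m. F i (fst (g i)) (snd (g i)))"
      using unpair_at by (intro prod.cong) auto
  next
    fix h assume h: "h \<in> {1..2*m} \<rightarrow>\<^sub>E C"
    show "unpair (pair h) = h"
    proof
      fix p
      show "unpair (pair h) p = h p"
        using h half_in[of p] by (cases "even p") (auto simp: unpair_def pair_def PiE_def extensional_def elim!: evenE oddE)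
    qed
    have "2*i-1 \<in> {1..2*m}" "2*i \<in> {1..2*m}" if "i \<in> {1..m}" for i
      using that by auto
    then show "pair h \<in> {1..m} \<rightarrow>\<^sub>E C\<times>C"
      using h by (auto simp: pair_def)
  qed
  finally show ?thesis .
qed

lemma pfaffian_congruence:
  fixes A M :: "nat \<Rightarrow> nat \<Rightarrow> 'a::field_char_0"
  shows "pfaffian (2*m) (\<lambda>i j. \<Sum>a\<in>{1..2*m}. \<Sum>b\<in>{1..2*m}. M i a * A a b * M j b)
       = det_on M {1..2*m} * pfaffian (2*m) A"
proof -
  define D where "D = {1..2*m}"
  define AP where "AP h = (\<Prod>i=1..m. A (h (2*i-1)) (h (2*i)))" for h
  define Del where "Del h = (\<Sum>s | s permutes D. of_int (sign s) * (\<Prod>r\<in>D. M (s r) (h r)))" for h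
  have fin: "finite D" "finite (D \<rightarrow>\<^sub>E D)" unfolding D_def by (auto intro: finite_PiE)
  have expand: "(\<Prod>i=1..m. \<Sum>a\<in>D. \<Sum>b\<in>D. M (s (2*i-1)) a * A a b * M (s (2*i)) b)
      = (\<Sum>h\<in>D \<rightarrow>\<^sub>E D. AP h * (\<Prod>r\<in>D. M (s r) (h r)))" for s
  proof -
    have "(\<Prod>i=1..m. \<Sum>a\<in>D. \<Sum>b\<in>D. M (s (2*i-1)) a * A a b * M (s (2*i)) b)
        = (\<Sum>h\<in>D \<rightarrow>\<^sub>E D. \<Prod>i=1..m.
            M (s (2*i-1)) (h (2*i-1)) * A (h (2*i-1)) (h (2*i)) * M (s (2*i)) (h (2*i)))"
      unfolding D_def by (rule prod_sum_pairs_PiE) simp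
    also have "\<dots> = (\<Sum>h\<in>D \<rightarrow>\<^sub>E D. AP h * (\<Prod>r\<in>D. M (s r) (h r)))"
      unfolding AP_def D_def prod_consecutive_pairs[symmetric, where f = "\<lambda>r. M (s r) (h r)" for h]
      by (intro sum.cong refl) (simp add: prod.distrib[symmetric] mult_ac)
    finally show ?thesis .
  qed
  text \<open>Expanding the products gives a sum over all maps \<open>h : D \<rightarrow> D\<close>; the terms of non-injective
    maps cancel in pairs, and for a permutation \<open>h\<close> the sum over \<open>s\<close> is \<open>sign h * det M\<close>.\<close>
  have "(\<Sum>s | s permutes D. of_int (sign s)
          * (\<Prod>i=1..m. \<Sum>a\<in>D. \<Sum>b\<in>D. M (s (2*i-1)) a * A a b * M (s (2*i)) b))
      = (\<Sum>h\<in>D \<rightarrow>\<^sub>E D. AP h * Del h)"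
    unfolding expand Del_def sum_distrib_left by (subst sum.swap) (simp add: mult_ac)
  also have "\<dots> = (\<Sum>h | h \<in> D \<rightarrow>\<^sub>E D \<and> inj_on h D. AP h * Del h)"
  proof (rule sum.mono_neutral_right[OF fin(2)])
    show "\<forall>h\<in>(D \<rightarrow>\<^sub>E D) - {h \<in> D \<rightarrow>\<^sub>E D. inj_on h D}. AP h * Del h = 0"
      unfolding Del_def inj_on_def using sum_sign_prod_eq_0_if_not_inj_on[OF fin(1)] by auto
  qed auto
  also have "\<dots> = (\<Sum>t | t permutes D. AP (restrict t D) * Del (restrict t D))"
    by (rule sum_inj_PiE_eq_sum_permutes[OF fin(1)])
  also have "\<dots> = (\<Sum>t | t permutes D. det_on M D * (of_int (sign t) * AP t))"
  proof (intro sum.cong refl)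
    fix t assume "t \<in> {t. t permutes D}"
    then have t: "t permutes D" by simp
    have "AP (restrict t D) = AP t" unfolding AP_def D_def by (intro prod.cong) auto
    moreover have "Del (restrict t D) = of_int (sign t) * det_on M D"
      unfolding Del_def using sum_sign_prod_permutes[OF fin(1) t] by simp
    ultimately show "AP (restrict t D) * Del (restrict t D) = det_on M D * (of_int (sign t) * AP t)"
      by (simp add: mult_ac)
  qed
  finally show ?thesis
    unfolding pfaffian_def D_def AP_def by (simp add: sum_distrib_left mult_ac)
qed

lemma pfaffian_cong:
  assumes "\<And>i j. i \<in> {1..d} \<Longrightarrow> j \<in> {1..d} \<Longrightarrow> A i j = B i j"
  shows "pfaffian d A = pfaffian d B"
  unfolding pfaffian_def
proof (intro arg_cong2[where f="(/)"] refl sum.cong arg_cong2[where f="(*)"] prod.cong)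
  fix s i assume "s \<in> {s. s permutes {1..d}}" and i: "i \<in> {1..d div 2}"
  then have s: "s permutes {1..d}" and "2*i-1 \<in> {1..d}" "2*i \<in> {1..d}" by auto
  then have "s (2*i-1) \<in> {1..d}" "s (2*i) \<in> {1..d}"
    using permutes_in_image[OF s] by blast+
  then show "A (s (2*i-1)) (s (2*i)) = B (s (2*i-1)) (s (2*i))" by (rule assms)
qed

section \<open>The alternating binomial transform\<close>

definition alt_binom :: "nat \<Rightarrow> nat \<Rightarrow> 'a::field_char_0" where
  "alt_binom i a = (-1)^(i-1) * of_nat ((i-1) choose (a-1))"

lemma sum_alt_binom_gchoose_pred:
  fixes z :: "'a::field_char_0"
  assumes "i \<ge> 1"
  shows "(\<Sum>a=1..i. alt_binom i a * (z gchoose (a-1))) = (-1-z) gchoose (i-1)"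
proof -
  obtain m where i: "i = Suc m" using assms by (cases i) auto
  have "(\<Sum>a=1..i. alt_binom i a * (z gchoose (a-1))) = (\<Sum>k=0..m. alt_binom i (Suc k) * (z gchoose k))"
    unfolding i by (simp only: One_nat_def sum.shift_bounds_cl_Suc_ivl; simp)
  also have "\<dots> = (-1)^m * (\<Sum>k=0..m. (z gchoose k) * (of_nat m gchoose (m - k)))"
    unfolding alt_binom_def i sum_distrib_left
    by (intro sum.cong refl) (auto simp: binomial_gbinomial[symmetric] binomial_symmetric[symmetric])
  also have "\<dots> = (-1)^m * ((z + of_nat m) gchoose m)"
    by (simp add: gbinomial_Vandermonde)
  also have "\<dots> = (-1-z) gchoose (i-1)"
    using gbinomial_minus[of "z+1" m] unfolding i by (simp add: algebra_simps)
  finally show ?thesis .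
qed

lemma sum_alt_binom_gchoose:
  fixes z :: "'a::field_char_0"
  assumes "i \<ge> 1"
  shows "(\<Sum>a=1..i. alt_binom i a * (z gchoose a)) = - ((-z) gchoose i)"
proof -
  obtain m where i: "i = Suc m" using assms by (cases i) auto
  have "(\<Sum>a=1..i. alt_binom i a * (z gchoose a)) = (\<Sum>k=0..m. alt_binom i (Suc k) * (z gchoose Suc k))"
    unfolding i by (simp only: One_nat_def sum.shift_bounds_cl_Suc_ivl; simp)
  also have "\<dots> = (-1)^m * (\<Sum>k=0..m. (z gchoose Suc k) * (of_nat m gchoose (Suc m - Suc k)))"
    unfolding alt_binom_def i sum_distrib_left
    by (intro sum.cong refl) (auto simp: binomial_gbinomial[symmetric] binomial_symmetric[symmetric])
  also have "(\<Sum>k=0..m. (z gchoose Suc k) * (of_nat m gchoose (Suc m - Suc k)))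
      = (\<Sum>k=0..Suc m. (z gchoose k) * (of_nat m gchoose (Suc m - k)))"
    by (simp only: sum.atLeast0_atMost_Suc_shift) (simp add: binomial_gbinomial[symmetric])
  also have "\<dots> = (z + of_nat m) gchoose Suc m"
    by (rule gbinomial_Vandermonde)
  also have "(-1)^m * \<dots> = - ((-z) gchoose i)"
    using gbinomial_minus[of z "Suc m"] unfolding i by (simp add: algebra_simps)
  finally show ?thesis .
qed

section \<open>Polynomial functions\<close>

definition polyfun :: "('a::field_char_0 \<Rightarrow> 'a) \<Rightarrow> bool" where
  "polyfun f \<longleftrightarrow> (\<exists>p. \<forall>w. f w = poly p w)"

lemma polyfun_const: "polyfun (\<lambda>w. c)"
  unfolding polyfun_def by (rule exI[of _ "[:c:]"]) simp

lemma polyfun_ident: "polyfun (\<lambda>w. w)"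
  unfolding polyfun_def by (rule exI[of _ "[:0,1:]"]) simp

lemma polyfun_add: "polyfun f \<Longrightarrow> polyfun g \<Longrightarrow> polyfun (\<lambda>w. f w + g w)"
  unfolding polyfun_def by (metis poly_add)

lemma polyfun_diff: "polyfun f \<Longrightarrow> polyfun g \<Longrightarrow> polyfun (\<lambda>w. f w - g w)"
  unfolding polyfun_def by (metis poly_diff)

lemma polyfun_mult: "polyfun f \<Longrightarrow> polyfun g \<Longrightarrow> polyfun (\<lambda>w. f w * g w)"
  unfolding polyfun_def by (metis poly_mult)

lemma polyfun_sum:
  "finite A \<Longrightarrow> (\<And>a. a \<in> A \<Longrightarrow> polyfun (f a)) \<Longrightarrow> polyfun (\<lambda>w. \<Sum>a\<in>A. f a w)"
  by (induction A rule: finite_induct) (auto intro: polyfun_add polyfun_const)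

lemma polyfun_prod:
  "finite A \<Longrightarrow> (\<And>a. a \<in> A \<Longrightarrow> polyfun (f a)) \<Longrightarrow> polyfun (\<lambda>w. \<Prod>a\<in>A. f a w)"
  by (induction A rule: finite_induct) (auto intro: polyfun_mult polyfun_const)

lemma polyfun_gbinomial: "polyfun (\<lambda>w. w gchoose k)"
proof -
  have "(\<lambda>w::'a. w gchoose k) = (\<lambda>w. (\<Prod>i=0..<k. w - of_nat i) * (1 / fact k))"
    by (rule ext) (metis gbinomial_mult_fact' fact_nonzero nonzero_mult_div_cancel_right times_divide_eq_right mult_1_right)
  moreover have "polyfun (\<lambda>w::'a. (\<Prod>i=0..<k. w - of_nat i) * (1 / fact k))"
    by (intro polyfun_mult polyfun_prod polyfun_diff polyfun_ident polyfun_const) auto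
  ultimately show ?thesis by simp
qed

lemma polyfun_reflect: "polyfun f \<Longrightarrow> polyfun (\<lambda>w. f (c - w))"
  unfolding polyfun_def
proof (elim exE)
  fix p assume "\<forall>w. f w = poly p w"
  then show "\<exists>q. \<forall>w. f (c - w) = poly q w"
    by (intro exI[of _ "pcompose p [:c, -1:]"]) (simp add: poly_pcompose)
qed

lemma polyfun_periodic_const:
  fixes f :: "'a::field_char_0 \<Rightarrow> 'a"
  assumes f: "polyfun f" and periodic: "\<And>w. f (w + 1) = f w"
  shows "f w = f v"
proof -
  obtain p where p: "\<And>w. f w - f v = poly p w"
    using polyfun_diff[OF f polyfun_const] unfolding polyfun_def by metis
  have "f (of_nat k + v) = f v" for k
  proof (induction k)
    case (Suc k)
    have "of_nat (Suc k) + v = (of_nat k + v) + 1" by simp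
    then show ?case using Suc periodic by metis
  qed simp
  then have "range (\<lambda>k::nat. of_nat k + v) \<subseteq> {w. poly p w = 0}" using p[symmetric] by auto
  moreover have "inj (\<lambda>k::nat. of_nat k + v)" by (auto intro: injI)
  ultimately have "p = 0" using poly_roots_finite finite_imageD finite_subset infinite_UNIV_nat by metis
  then show ?thesis using p[of w] by simp
qed

section \<open>The block \<open>R\<close>\<close>

definition Rfun :: "nat \<Rightarrow> nat \<Rightarrow> 'a::field_char_0 \<Rightarrow> 'a" where
  "Rfun i j w = (\<Sum>l=0..i-1.
      (of_int (int j - int i) / of_nat i) * of_nat ((j - 1) choose (i - 1 - l))
      * of_nat ((l + j) choose l) * (w gchoose (l + j + 1)))"

lemma Rpol_eq_Rfun: "Rpol n x i j = Rfun i j (2*x + 2*of_nat n + 2)"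
  unfolding Rpol_def Rfun_def ..

definition binom_minor :: "nat \<Rightarrow> nat \<Rightarrow> 'a::field_char_0 \<Rightarrow> 'a" where
  "binom_minor a b z = (z gchoose a) * (z gchoose (b-1)) - (z gchoose b) * (z gchoose (a-1))"

lemma Rfun_diff:
  fixes w :: "'a::field_char_0"
  assumes "a \<ge> 1" "b \<ge> 1"
  shows "Rfun a b (w+1) - Rfun a b w
       = (of_int (int b - int a) / of_nat a) * ((w-1) gchoose (a-1)) * (w gchoose b)"
proof -
  define c where "c = (of_int (int b - int a) / of_nat a :: 'a)"
  have "Rfun a b (w+1) - Rfun a b w = (\<Sum>l=0..a-1. c * of_nat ((b - 1) choose (a - 1 - l))
      * of_nat ((l + b) choose l) * (w gchoose (l + b)))"
  proof -
    have pascal: "((w + 1) gchoose Suc k) - (w gchoose Suc k) = w gchoose k" for k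
      using gbinomial_Suc_Suc[of w k] by simp
    show ?thesis
      unfolding Rfun_def c_def[symmetric] sum_subtractf[symmetric]
      by (intro sum.cong refl) (simp only: right_diff_distrib[symmetric] Suc_eq_plus1[symmetric] pascal)
  qed
  also have "\<dots> = (\<Sum>l=0..a-1. c * (w gchoose b) * ((w - of_nat b) gchoose l) * (of_nat (b-1) gchoose (a - 1 - l)))"
  proof (intro sum.cong refl)
    fix l
    have "(w gchoose (l+b)) * (of_nat (l+b) gchoose b) = (w gchoose b) * ((w - of_nat b) gchoose l)"
      using gbinomial_trinomial_revision[of b "l+b" w] by simp
    moreover have "of_nat ((l + b) choose l) = (of_nat (l+b) gchoose b :: 'a)"
      by (metis binomial_gbinomial binomial_symmetric le_add2 add_diff_cancel_right')
    ultimately show "c * of_nat ((b - 1) choose (a - 1 - l)) * of_nat ((l + b) choose l) * (w gchoose (l + b))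
       = c * (w gchoose b) * ((w - of_nat b) gchoose l) * (of_nat (b-1) gchoose (a - 1 - l))"
      by (simp add: binomial_gbinomial algebra_simps)
  qed
  also have "\<dots> = c * (w gchoose b) * (\<Sum>l=0..a-1. ((w - of_nat b) gchoose l) * (of_nat (b-1) gchoose (a - 1 - l)))"
    by (simp add: sum_distrib_left mult.assoc)
  also have "(\<Sum>l=0..a-1. ((w - of_nat b) gchoose l) * (of_nat (b-1) gchoose (a - 1 - l))) = (w - 1) gchoose (a-1)"
    using gbinomial_Vandermonde[of "w - of_nat b" "of_nat (b-1)" "a-1"] assms by (simp add: of_nat_diff)
  finally show ?thesis unfolding c_def by (simp add: algebra_simps)
qed

lemma binom_minor_eq:
  fixes z :: "'a::field_char_0"
  assumes "a \<ge> 1" "b \<ge> 1"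
  shows "(of_int (int b - int a) / of_nat a) * (z gchoose (a-1)) * ((z+1) gchoose b) = binom_minor a b z"
proof -
  obtain a' where a: "a = Suc a'" using assms by (cases a) auto
  obtain b' where b: "b = Suc b'" using assms by (cases b) auto
  have step_a: "of_nat a * (z gchoose a) = (z - of_nat a') * (z gchoose a')"
    and step_b: "of_nat b * (z gchoose b) = (z - of_nat b') * (z gchoose b')"
    unfolding a b using gbinomial_absorption gbinomial_absorb_comp by (metis diff_Suc_1)+
  have absorb: "of_nat b * ((z+1) gchoose b) = (z + 1) * (z gchoose b')"
    unfolding b using gbinomial_absorption[of b' "z+1"] by simp
  have "of_nat a * of_nat b * ((of_int (int b - int a) / of_nat a) * (z gchoose (a-1)) * ((z+1) gchoose b))
      = (of_nat b - of_nat a) * (z gchoose a') * (of_nat b * ((z+1) gchoose b))"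
  proof -
    have "(of_int (int b - int a) :: 'a) = of_nat b - of_nat a" "(of_nat a :: 'a) \<noteq> 0"
      using assms by simp_all
    then show ?thesis using a by (simp add: field_simps)
  qed
  also have "\<dots> = (of_nat b - of_nat a) * (z gchoose a') * ((z + 1) * (z gchoose b'))"
    by (simp only: absorb)
  also have "\<dots> = of_nat b * (of_nat a * (z gchoose a)) * (z gchoose b')
      - of_nat a * (of_nat b * (z gchoose b)) * (z gchoose a')"
    unfolding step_a step_b by (simp add: a b algebra_simps)
  also have "\<dots> = of_nat a * of_nat b * binom_minor a b z"
    unfolding binom_minor_def by (simp add: a b algebra_simps)
  finally have "of_nat a * of_nat b * ((of_int (int b - int a) / of_nat a) * (z gchoose (a-1)) * ((z+1) gchoose b))
      = of_nat a * of_nat b * binom_minor a b z" .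
  moreover have "of_nat a * of_nat b \<noteq> (0::'a)" using assms by simp
  ultimately show ?thesis using mult_left_cancel by blast
qed

lemma Rfun_diff_binom_minor:
  fixes w :: "'a::field_char_0"
  assumes "a \<ge> 1" "b \<ge> 1"
  shows "Rfun a b (w+1) - Rfun a b w = binom_minor a b (w-1)"
  using Rfun_diff[OF assms, of w] binom_minor_eq[OF assms, of "w-1"] by simp

lemma polyfun_Rfun: "polyfun (Rfun a b)"
  unfolding Rfun_def by (intro polyfun_sum polyfun_mult polyfun_const polyfun_gbinomial) auto

lemma Rfun_one:
  assumes "b \<ge> 1"
  shows "Rfun a b (1::'a::field_char_0) = 0"
proof -
  have "(1::'a) gchoose k = 0" if "k \<ge> 2" for k
  proof -
    have "(1::nat) choose k = 0" using that by (intro binomial_eq_0) simp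
    then show ?thesis using binomial_gbinomial[of 1 k, where 'a='a] by (metis of_nat_0 of_nat_1)
  qed
  then show ?thesis using assms unfolding Rfun_def by (intro sum.neutral) auto
qed

lemma sum_sum_mult_diff_factor:
  fixes f g p q r s :: "'i \<Rightarrow> 'a::comm_ring_1"
  shows "(\<Sum>a\<in>A. \<Sum>b\<in>B. f a * g b * (p a * q b - r b * s a))
       = (\<Sum>a\<in>A. f a * p a) * (\<Sum>b\<in>B. g b * q b) - (\<Sum>b\<in>B. g b * r b) * (\<Sum>a\<in>A. f a * s a)"
  by (simp add: sum_product sum_subtractf right_diff_distrib sum.swap[of _ A B] algebra_simps)

lemma sum_alt_binom_binom_minor:
  fixes z :: "'a::field_char_0"
  assumes "i \<ge> 1" "j \<ge> 1"
  shows "(\<Sum>a=1..i. \<Sum>b=1..j. alt_binom i a * alt_binom j b * binom_minor a b z)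
     = ((-z) gchoose j) * ((-1-z) gchoose (i-1)) - ((-z) gchoose i) * ((-1-z) gchoose (j-1))"
proof -
  have "(\<Sum>a=1..i. \<Sum>b=1..j. alt_binom i a * alt_binom j b * binom_minor a b z)
      = (\<Sum>a=1..i. alt_binom i a * (z gchoose a)) * (\<Sum>b=1..j. alt_binom j b * (z gchoose (b-1)))
      - (\<Sum>b=1..j. alt_binom j b * (z gchoose b)) * (\<Sum>a=1..i. alt_binom i a * (z gchoose (a-1)))"
    unfolding binom_minor_def by (rule sum_sum_mult_diff_factor)
  then show ?thesis
    unfolding sum_alt_binom_gchoose[OF assms(1)] sum_alt_binom_gchoose[OF assms(2)]
      sum_alt_binom_gchoose_pred[OF assms(1)] sum_alt_binom_gchoose_pred[OF assms(2)]
    by simp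
qed

lemma sum_alt_binom_Rfun:
  fixes w :: "'a::field_char_0"
  assumes "i \<ge> 1" "j \<ge> 1"
  shows "(\<Sum>a=1..i. \<Sum>b=1..j. alt_binom i a * alt_binom j b * Rfun a b w) = Rfun i j (2 - w)"
proof -
  define K where "K w = (\<Sum>a=1..i. \<Sum>b=1..j. alt_binom i a * alt_binom j b * Rfun a b w) - Rfun i j (2 - w)"
    for w :: 'a
  have periodic: "K (w+1) = K w" for w
  proof -
    let ?S = "\<lambda>w. \<Sum>a=1..i. \<Sum>b=1..j. alt_binom i a * alt_binom j b * Rfun a b w"
    have "?S (w+1) - ?S w = (\<Sum>a=1..i. \<Sum>b=1..j. alt_binom i a * alt_binom j b * binom_minor a b (w-1))"
      unfolding sum_subtractf[symmetric] right_diff_distrib[symmetric]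
      by (intro sum.cong refl) (simp add: Rfun_diff_binom_minor)
    moreover have "Rfun i j (2 - w) - Rfun i j (2 - (w+1)) = binom_minor i j (-w)"
      using Rfun_diff_binom_minor[OF assms, of "1-w"] by (simp add: algebra_simps)
    moreover have "K (w+1) - K w = (?S (w+1) - ?S w) + (Rfun i j (2 - w) - Rfun i j (2 - (w+1)))"
      unfolding K_def by (simp add: algebra_simps)
    ultimately have "K (w+1) - K w
        = (\<Sum>a=1..i. \<Sum>b=1..j. alt_binom i a * alt_binom j b * binom_minor a b (w-1)) + binom_minor i j (-w)"
      by simp
    also have "\<dots> = 0"
      unfolding sum_alt_binom_binom_minor[OF assms]
      using gbinomial_Suc_Suc[of "-w" "i-1"] gbinomial_Suc_Suc[of "-w" "j-1"] assms
      by (simp add: binom_minor_def algebra_simps)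
    finally show ?thesis by simp
  qed
  have "polyfun K" unfolding K_def
    by (intro polyfun_diff polyfun_sum polyfun_mult polyfun_const polyfun_Rfun polyfun_reflect[OF polyfun_Rfun]) auto
  then have "K w = K 1" using periodic by (rule polyfun_periodic_const)
  also have "K 1 = 0" using assms by (simp add: K_def Rfun_one)
  finally show ?thesis unfolding K_def by simp
qed

section \<open>The matrix \<open>N\<close> under \<open>x \<mapsto> -2n-1-x\<close>\<close>

definition mirror :: "nat \<Rightarrow> 'a::field_char_0 \<Rightarrow> 'a" where
  "mirror n x = - (2 * of_nat n + 1) - x"

lemma mirror_shifts:
  fixes x :: "'a::field_char_0"
  shows "mirror n x + of_nat n = -1 - (x + of_nat n)"
    and "mirror n x + of_nat n + 1 = - (x + of_nat n)"
    and "of_nat n + mirror n x = - (of_nat n + x + 1)"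
    and "of_nat n + mirror n x + 1 = - (of_nat n + x)"
    and "2 * mirror n x + 2 * of_nat n + 1 = - (2 * x + 2 * of_nat n + 1)"
    and "2 * of_nat n + 2 * mirror n x + 1 = - (2 * of_nat n + 2 * x + 1)"
    and "2 * mirror n x + 2 * of_nat n + 2 = 2 - (2 * x + 2 * of_nat n + 2)"
  unfolding mirror_def by (simp_all add: algebra_simps)

lemma sum_alt_binom_Ncol:
  fixes x :: "'a::field_char_0"
  assumes "i \<ge> 1"
  shows "(\<Sum>a=1..i. alt_binom i a * Ncol n x a) = - Ncol n (mirror n x) i"
  unfolding Ncol_def mirror_shifts right_diff_distrib sum_subtractf sum_alt_binom_gchoose[OF assms]
  by (simp add: algebra_simps)

lemma sum_alt_binom_Nmat_block:
  fixes x :: "'a::field_char_0"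
  assumes i: "1 \<le> i" "i \<le> 2*n" and j: "1 \<le> j" "j \<le> 2*n"
  shows "(\<Sum>a=1..i. alt_binom i a * (\<Sum>b=1..j. alt_binom j b * Nmat n x a b)) = Nmat n (mirror n x) i j"
proof -
  define P where "P a = (2*x + 2*of_nat n + 1) gchoose a" for a
  define Q where "Q b = ((x + of_nat n) gchoose b) + ((x + of_nat n + 1) gchoose b)" for b
  define w where "w = 2*x + 2*of_nat n + 2"
  have "(\<Sum>a=1..i. alt_binom i a * (\<Sum>b=1..j. alt_binom j b * Nmat n x a b))
      = (\<Sum>a=1..i. \<Sum>b=1..j. alt_binom i a * alt_binom j b * (Rfun a b w + (P a * Q b - P b * Q a)))"
    using i j unfolding Nmat_def Rpol_eq_Rfun Tpol_def P_def Q_def w_def sum_distrib_left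
    by (intro sum.cong refl) (auto simp: algebra_simps)
  also have "\<dots> = (\<Sum>a=1..i. \<Sum>b=1..j. alt_binom i a * alt_binom j b * Rfun a b w)
       + ((\<Sum>a=1..i. alt_binom i a * P a) * (\<Sum>b=1..j. alt_binom j b * Q b)
          - (\<Sum>b=1..j. alt_binom j b * P b) * (\<Sum>a=1..i. alt_binom i a * Q a))"
    unfolding sum_sum_mult_diff_factor[symmetric] distrib_left sum.distrib ..
  also have "\<dots> = Nmat n (mirror n x) i j"
  proof -
    have sums: "(\<Sum>a=1..k. alt_binom k a * P a) = - ((2 * mirror n x + 2 * of_nat n + 1) gchoose k)"
      "(\<Sum>a=1..k. alt_binom k a * Q a)
        = - (((mirror n x + of_nat n) gchoose k) + ((mirror n x + of_nat n + 1) gchoose k))"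
      if "k \<ge> 1" for k
      unfolding P_def Q_def distrib_left sum.distrib sum_alt_binom_gchoose[OF that] mirror_shifts
      by (simp_all add: algebra_simps)
    show ?thesis
      using i j unfolding sum_alt_binom_Rfun[OF i(1) j(1)] sums[OF i(1)] sums[OF j(1)]
        w_def mirror_shifts(7)[symmetric]
      by (simp add: Nmat_def Rpol_eq_Rfun Tpol_def algebra_simps)
  qed
  finally show ?thesis .
qed

definition transform_mat :: "nat \<Rightarrow> nat \<Rightarrow> nat \<Rightarrow> 'a::field_char_0" where
  "transform_mat n i a =
    (if 1 \<le> i \<and> i \<le> 2*n \<and> 1 \<le> a \<and> a \<le> i then alt_binom i a
     else if i = 2*n+1 \<and> a = 2*n+1 then -1
     else if i = 2*n+2 \<and> a = 2*n+2 then 1 else 0)"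

lemma sum_transform_mat_mult:
  fixes f :: "nat \<Rightarrow> 'a::field_char_0"
  assumes i: "i \<in> {1..2*n+2}"
  shows "(\<Sum>a\<in>{1..2*n+2}. transform_mat n i a * f a) =
     (if i \<le> 2*n then (\<Sum>a=1..i. alt_binom i a * f a) else if i = 2*n+1 then - f (2*n+1) else f (2*n+2))"
proof -
  consider "i \<le> 2*n" | "i = 2*n+1" | "i = 2*n+2" using i by force
  then show ?thesis
  proof cases
    case 1
    then have "(\<Sum>a\<in>{1..2*n+2}. transform_mat n i a * f a) = (\<Sum>a\<in>{1..i}. transform_mat n i a * f a)"
      using i by (intro sum.mono_neutral_right) (auto simp: transform_mat_def)
    also have "\<dots> = (\<Sum>a=1..i. alt_binom i a * f a)"
      using 1 i by (intro sum.cong refl) (auto simp: transform_mat_def)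
    finally show ?thesis using 1 by simp
  next
    case 2
    then have "(\<Sum>a\<in>{1..2*n+2}. transform_mat n i a * f a) = (\<Sum>a\<in>{2*n+1}. transform_mat n i a * f a)"
      by (intro sum.mono_neutral_right) (auto simp: transform_mat_def)
    then show ?thesis using 2 by (simp add: transform_mat_def)
  next
    case 3
    then have "(\<Sum>a\<in>{1..2*n+2}. transform_mat n i a * f a) = (\<Sum>a\<in>{2*n+2}. transform_mat n i a * f a)"
      by (intro sum.mono_neutral_right) (auto simp: transform_mat_def)
    then show ?thesis using 3 by (simp add: transform_mat_def)
  qed
qed

lemma det_on_transform_mat:
  "det_on (transform_mat n :: nat \<Rightarrow> nat \<Rightarrow> 'a::field_char_0) {1..2*n+2} = (-1)^(n+1)"
proof -
  have "det_on (transform_mat n :: nat \<Rightarrow> nat \<Rightarrow> 'a) {1..2*n+2} = (\<Prod>p=1..2*n+2. transform_mat n p p)"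
    by (rule det_on_lower_triangular) (auto simp: transform_mat_def)
  also have "\<dots> = (\<Prod>p=1..2*n. transform_mat n p p) * transform_mat n (2*n+1) (2*n+1) * transform_mat n (2*n+2) (2*n+2)"
    by (simp add: prod.nat_ivl_Suc' mult_ac)
  also have "(\<Prod>p=1..2*n. transform_mat n p p) = (\<Prod>p=1..2*n. (-1)^(p-1) :: 'a)"
    by (intro prod.cong refl) (auto simp: transform_mat_def alt_binom_def)
  also have "\<dots> = (\<Prod>i=1..n. (-1)^(2*i-1-1) * (-1)^(2*i-1))"
    by (rule prod_consecutive_pairs[symmetric])
  also have "\<dots> = (\<Prod>i=1..n. -1)"
  proof (intro prod.cong refl)
    fix i :: nat assume "i \<in> {1..n}"
    then obtain k where "i = Suc k" by (cases i) auto
    then show "(-1)^(2*i-1-1) * (-1)^(2*i-1) = (-1 :: 'a)" by simp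
  qed
  also have "transform_mat n (2*n+1) (2*n+1) = (-1 :: 'a)" by (simp add: transform_mat_def)
  also have "transform_mat n (2*n+2) (2*n+2) = (1 :: 'a)" by (simp add: transform_mat_def)
  finally show ?thesis by simp
qed

lemma sum_alt_binom_Nmat_col_fst:
  fixes x :: "'a::field_char_0"
  assumes "1 \<le> i" "i \<le> 2*n"
  shows "(\<Sum>a=1..i. alt_binom i a * Nmat n x a (2*n+1)) = - Nmat n (mirror n x) i (2*n+1)"
proof -
  have "(\<Sum>a=1..i. alt_binom i a * Nmat n x a (2*n+1)) = (\<Sum>a=1..i. alt_binom i a * Ncol n x a)"
    using assms by (intro sum.cong refl) (simp add: Nmat_def)
  then show ?thesis using assms sum_alt_binom_Ncol[OF assms(1), of n x] by (simp add: Nmat_def)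
qed

lemma sum_alt_binom_Nmat_col_snd:
  fixes x :: "'a::field_char_0"
  assumes "1 \<le> i" "i \<le> 2*n"
  shows "(\<Sum>a=1..i. alt_binom i a * Nmat n x a (2*n+2)) = Nmat n (mirror n x) i (2*n+2)"
proof -
  have "(\<Sum>a=1..i. alt_binom i a * Nmat n x a (2*n+2)) = (\<Sum>a=1..i. alt_binom i a * ((x + of_nat n) gchoose (a-1)))"
    using assms by (intro sum.cong refl) (simp add: Nmat_def)
  then show ?thesis
    using assms sum_alt_binom_gchoose_pred[OF assms(1), of "x + of_nat n"] by (simp add: mirror_shifts(1) Nmat_def)
qed

lemma Nmat_border_skew:
  assumes "1 \<le> b" "b \<le> 2*n" "p \<in> {2*n+1, 2*n+2}"
  shows "Nmat n x p b = - Nmat n x b p"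
  using assms by (auto simp: Nmat_def)

lemma sum_alt_binom_Nmat_border_row:
  fixes x :: "'a::field_char_0"
  assumes j: "1 \<le> j" "j \<le> 2*n" and p: "p \<in> {2*n+1, 2*n+2}"
  shows "(\<Sum>b=1..j. alt_binom j b * Nmat n x p b) = (if p = 2*n+1 then -1 else 1) * Nmat n (mirror n x) p j"
proof -
  have "(\<Sum>b=1..j. alt_binom j b * Nmat n x p b) = (\<Sum>b=1..j. - (alt_binom j b * Nmat n x b p))"
    using j p by (intro sum.cong refl) (auto simp: Nmat_border_skew)
  then show ?thesis
    using j p sum_alt_binom_Nmat_col_fst[OF j, of x] sum_alt_binom_Nmat_col_snd[OF j, of x]
    by (auto simp: sum_negf Nmat_def)
qed

lemma Nmat_mirror_eq_congruence:
  fixes x :: "'a::field_char_0"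
  assumes i: "i \<in> {1..2*n+2}" and j: "j \<in> {1..2*n+2}"
  shows "Nmat n (mirror n x) i j
       = (\<Sum>a\<in>{1..2*n+2}. \<Sum>b\<in>{1..2*n+2}. transform_mat n i a * Nmat n x a b * transform_mat n j b)"
proof -
  define col where "col a = (if j \<le> 2*n then (\<Sum>b=1..j. alt_binom j b * Nmat n x a b)
     else if j = 2*n+1 then - Nmat n x a (2*n+1) else Nmat n x a (2*n+2))" for a
  have "(\<Sum>a\<in>{1..2*n+2}. \<Sum>b\<in>{1..2*n+2}. transform_mat n i a * Nmat n x a b * transform_mat n j b)
      = (\<Sum>a\<in>{1..2*n+2}. transform_mat n i a * col a)"
    unfolding col_def sum_transform_mat_mult[OF j, symmetric] sum_distrib_left by (simp add: mult_ac)
  also have "\<dots> = (if i \<le> 2*n then (\<Sum>a=1..i. alt_binom i a * col a)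
      else if i = 2*n+1 then - col (2*n+1) else col (2*n+2))"
    by (rule sum_transform_mat_mult[OF i])
  also have "\<dots> = Nmat n (mirror n x) i j"
    using i j sum_alt_binom_Nmat_block[of i n j x]
      sum_alt_binom_Nmat_col_fst[of i n x] sum_alt_binom_Nmat_col_snd[of i n x]
      sum_alt_binom_Nmat_border_row[of j n "2*n+1" x] sum_alt_binom_Nmat_border_row[of j n "2*n+2" x]
    by (auto simp: col_def Nmat_def sum_negf)
  finally show ?thesis ..
qed

lemma pfaffian_Nmat_mirror:
  fixes x :: "'a::field_char_0"
  shows "pfaffian (2*n+2) (Nmat n (mirror n x)) = (-1)^(n+1) * pfaffian (2*n+2) (Nmat n x)"
proof -
  have d: "2*(n+1) = 2*n+2" by simp
  have "pfaffian (2*(n+1)) (Nmat n (mirror n x))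
      = pfaffian (2*(n+1)) (\<lambda>i j. \<Sum>a\<in>{1..2*(n+1)}. \<Sum>b\<in>{1..2*(n+1)}.
          transform_mat n i a * Nmat n x a b * transform_mat n j b)"
    unfolding d by (rule pfaffian_cong) (rule Nmat_mirror_eq_congruence)
  also have "\<dots> = det_on (transform_mat n) {1..2*(n+1)} * pfaffian (2*(n+1)) (Nmat n x)"
    by (rule pfaffian_congruence)
  finally show ?thesis unfolding d det_on_transform_mat .
qed

theorem mainTheorem11:
  fixes n :: nat and x :: "'a::field_char_0"
  assumes "n \<ge> 1"
  shows "pfaffian (2*n+2) (Nmat n x)
         = (-1) ^ (n+1) * pfaffian (2*n+2) (Nmat n (- (2*of_nat n + 1) - x))"
proof -
  have "(-1)^(n+1) * pfaffian (2*n+2) (Nmat n (mirror n x))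
      = ((-1)^(n+1) * (-1)^(n+1)) * pfaffian (2*n+2) (Nmat n x)"
    unfolding pfaffian_Nmat_mirror by (simp only: mult.assoc)
  then show ?thesis by (simp add: mirror_def flip: power_add)
qed

end
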